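(* Consider the optimization problem $\mathcal{P}_3$ with Lagrangian $h$ and multipliers $\theta_k,\Gamma_{k,l},\eta_{k,i\to l},\beta$ described in the context. The receivers, the Lagrange multiplier $\beta$ and the precoders given by $$V_{k,i\to l}=\alpha_{k,l}\,\mathbf{p}_k^H\mathbf{h}_{k,i}^H\,T_{k,i\to l}^{-1},$$ $$\beta=\frac{1}{E_{tx}}\sum_{k=1}^K\sum_{l=1}^L\sum_{i=l}^L\eta_{k,i\to l}\,b_{k,i\to l}\,|V_{k,i\to l}|^2,$$ $$\mathbf{p}_k=\Big[\beta\mathbf{I}+\sum_{l=1}^L\sum_{i=l}^L\sum_{j=l}^L\alpha_{k,j}\eta_{k,i\to l}b_{k,i\to l}\mathbf{h}_{k,i}^H|V_{k,i\to l}|^2\mathbf{h}_{k,i}+\sum_{t=1,t\ne k}^{K}\sum_{l=1}^L\sum_{i=l}^L\eta_{t,i\to l}b_{t,i\to l}\mathbf{h}_{t,i}^H|V_{t,i\to l}|^2\mathbf{h}_{t,i}\Big]^{-1}\Big[\sum_{l=1}^L\sum_{i=l}^L\eta_{k,i\to l}b_{k,i\to l}\alpha_{k,l}\mathbf{h}_{k,i}^H V_{k,i\to l}^{*}\Big]$$ satisfy the KKT conditions of $\mathcal{P}_3$.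
   Context: A base station with $M$ antennas serves $K$ clusters of $L$ single-antenna users each; user $i$ of cluster $k$ has channel row vector $\mathbf{h}_{k,i}\in\mathbb{C}^{1\times M}$. Power fractions satisfy $\alpha_{k,l}>0$, $\sum_{l=1}^L\alpha_{k,l}=1$. The precoder is $\mathbf{P}=[\mathbf{p}_1,\dots,\mathbf{p}_K]\in\mathbb{C}^{M\times K}$ with total power budget $E_{tx}>0$. For $1\le l\le i\le L$ define $r_{k,i\to l}=\sum_{j=l+1}^{L}\alpha_{k,j}|\mathbf{h}_{k,i}\mathbf{p}_k|^2+\sum_{t\ne k}|\mathbf{h}_{k,i}\mathbf{p}_t|^2+1$ and $T_{k,i\to l}=\alpha_{k,l}|\mathbf{h}_{k,i}\mathbf{p}_k|^2+r_{k,i\to l}$. For scalar receivers $V_{k,i\to l}\in\mathbb{C}$ define the MSE $\varepsilon_{k,i\to l}=|V_{k,i\to l}|^2T_{k,i\to l}+\alpha_{k,l}-2\,\mathrm{Re}\{\alpha_{k,l}V_{k,i\to l}\mathbf{h}_{k,i}\mathbf{p}_k\}$ and, for weights $b_{k,i\to l}>0$, the augmented weighted MSE $\xi_{k,i\to l}=b_{k,i\to l}\varepsilon_{k,i\to l}-\log(\alpha_{k,l}b_{k,i\to l})$. Problem $\mathcal{P}_3$: minimize $\bar c$ over $\mathbf{P}$, $\{\xi_{k,l}\}$, $\bar c$, $\{V_{k,i\to l}\}$, $\{b_{k,i\to l}\}$ subject to $\sum_{l=1}^L\xi_{k,l}\le\bar c$ for all $k$; $\xi_{k,i\to l}\le\xi_{k,l}$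 for all $k$ and $l\le i\le L$; $\xi_{k,l}\le\xi^{th}_{k,l}$ for all $k,l$ (given thresholds); $\mathrm{Tr}(\mathbf{P}\mathbf{P}^H)\le E_{tx}$. Its Lagrangian is $h=\bar c-\sum_k\theta_k\bar c+\sum_{k,l}\theta_k\xi_{k,l}+\sum_{k,l}\Gamma_{k,l}(\xi_{k,l}-\xi^{th}_{k,l})+\beta(\mathrm{Tr}(\mathbf{P}\mathbf{P}^H)-E_{tx})+\sum_k\sum_{l=1}^L\sum_{i=l}^L\eta_{k,i\to l}(\xi_{k,i\to l}-\xi_{k,l})$, with nonnegative multipliers $\theta_k,\Gamma_{k,l},\eta_{k,i\to l},\beta$. KKT conditions comprise stationarity of $h$ (complex derivatives with respect to conjugated variables), primal feasibility, dual nonnegativity and complementary slackness. *)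

theory Defs
  imports "HOL-Analysis.Analysis"
begin

text \<open>Indices are 0-based: clusters k < K, users l, i < L, antennas = index type 'm.
  Triple-indexed quantities (receivers V, weights b, multipliers eta) are indexed by (k, i, l),
  standing for the paper's k, i -> l with l <= i.\<close>

text \<open>Wirtinger derivative with respect to the conjugated variable, for a real-valued
  function f: g is the derivative of f w.r.t. conj z at z iff the real Frechet
  derivative of f at z is dz |-> 2 Re (conj g * dz).\<close>
definition has_conj_deriv :: "(complex \<Rightarrow> real) \<Rightarrow> complex \<Rightarrow> complex \<Rightarrow> bool" where
  "has_conj_deriv f g z \<longleftrightarrow> (f has_derivative (\<lambda>dz. 2 * Re (cnj g * dz))) (at z)"

definition has_conj_gradient ::
    "(complex^'m \<Rightarrow> real) \<Rightarrow> complex^'m \<Rightarrow> complex^'m \<Rightarrow> bool" where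
  "has_conj_gradient f g z \<longleftrightarrow>
     (f has_derivative (\<lambda>dz. 2 * Re (\<Sum>m\<in>UNIV. cnj (g $ m) * dz $ m))) (at z)"

definition rowmul :: "complex^'m \<Rightarrow> complex^'m \<Rightarrow> complex" where
  "rowmul h p = (\<Sum>m\<in>UNIV. h $ m * p $ m)"

text \<open>The M x M matrix h^H h for a row vector h.\<close>
definition outerH :: "complex^'m \<Rightarrow> complex^'m^'m" where
  "outerH h = (\<chi> r c. cnj (h $ r) * h $ c)"

definition cmat_scale :: "complex \<Rightarrow> complex^'m^'n \<Rightarrow> complex^'m^'n" where
  "cmat_scale c A = (\<chi> r s. c * A $ r $ s)"

text \<open>r_{k,i->l} (0-based: j ranges over l < j < L).\<close>
definition rterm :: "nat \<Rightarrow> nat \<Rightarrow> (nat \<Rightarrow> nat \<Rightarrow> real) \<Rightarrow> (nat \<Rightarrow> nat \<Rightarrow> complex^'m)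
    \<Rightarrow> (nat \<Rightarrow> complex^'m) \<Rightarrow> nat \<Rightarrow> nat \<Rightarrow> nat \<Rightarrow> real" where
  "rterm K L \<alpha> H P k i l =
     (\<Sum>j\<in>{l<..<L}. \<alpha> k j * (cmod (rowmul (H k i) (P k)))^2)
     + (\<Sum>t\<in>{..<K} - {k}. (cmod (rowmul (H k i) (P t)))^2) + 1"

definition Tterm :: "nat \<Rightarrow> nat \<Rightarrow> (nat \<Rightarrow> nat \<Rightarrow> real) \<Rightarrow> (nat \<Rightarrow> nat \<Rightarrow> complex^'m)
    \<Rightarrow> (nat \<Rightarrow> complex^'m) \<Rightarrow> nat \<Rightarrow> nat \<Rightarrow> nat \<Rightarrow> real" where
  "Tterm K L \<alpha> H P k i l =
     \<alpha> k l * (cmod (rowmul (H k i) (P k)))^2 + rterm K L \<alpha> H P k i l"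

definition mse :: "nat \<Rightarrow> nat \<Rightarrow> (nat \<Rightarrow> nat \<Rightarrow> real) \<Rightarrow> (nat \<Rightarrow> nat \<Rightarrow> complex^'m)
    \<Rightarrow> (nat \<Rightarrow> complex^'m) \<Rightarrow> (nat \<times> nat \<times> nat \<Rightarrow> complex) \<Rightarrow> nat \<Rightarrow> nat \<Rightarrow> nat \<Rightarrow> real" where
  "mse K L \<alpha> H P V k i l =
     (cmod (V (k,i,l)))^2 * Tterm K L \<alpha> H P k i l + \<alpha> k l
     - 2 * Re (complex_of_real (\<alpha> k l) * V (k,i,l) * rowmul (H k i) (P k))"

definition awmse :: "nat \<Rightarrow> nat \<Rightarrow> (nat \<Rightarrow> nat \<Rightarrow> real) \<Rightarrow> (nat \<Rightarrow> nat \<Rightarrow> complex^'m)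
    \<Rightarrow> (nat \<Rightarrow> complex^'m) \<Rightarrow> (nat \<times> nat \<times> nat \<Rightarrow> complex) \<Rightarrow> (nat \<times> nat \<times> nat \<Rightarrow> real)
    \<Rightarrow> nat \<Rightarrow> nat \<Rightarrow> nat \<Rightarrow> real" where
  "awmse K L \<alpha> H P V b k i l =
     b (k,i,l) * mse K L \<alpha> H P V k i l - ln (\<alpha> k l * b (k,i,l))"

definition lagrangian :: "nat \<Rightarrow> nat \<Rightarrow> (nat \<Rightarrow> nat \<Rightarrow> real) \<Rightarrow> (nat \<Rightarrow> nat \<Rightarrow> complex^'m)
    \<Rightarrow> real \<Rightarrow> (nat \<Rightarrow> nat \<Rightarrow> real)
    \<Rightarrow> (nat \<Rightarrow> real) \<Rightarrow> (nat \<Rightarrow> nat \<Rightarrow> real) \<Rightarrow> (nat \<times> nat \<times> nat \<Rightarrow> real) \<Rightarrow> real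
    \<Rightarrow> real \<Rightarrow> (nat \<Rightarrow> nat \<Rightarrow> real) \<Rightarrow> (nat \<Rightarrow> complex^'m)
    \<Rightarrow> (nat \<times> nat \<times> nat \<Rightarrow> complex) \<Rightarrow> (nat \<times> nat \<times> nat \<Rightarrow> real) \<Rightarrow> real" where
  "lagrangian K L \<alpha> H Etx xith \<theta> \<Gamma> \<eta> \<beta> cbar \<xi> P V b =
     cbar - (\<Sum>k<K. \<theta> k * cbar)
     + (\<Sum>k<K. \<Sum>l<L. \<theta> k * \<xi> k l)
     + (\<Sum>k<K. \<Sum>l<L. \<Gamma> k l * (\<xi> k l - xith k l))
     + \<beta> * ((\<Sum>k<K. (norm (P k))^2) - Etx)
     + (\<Sum>k<K. \<Sum>l<L. \<Sum>i\<in>{l..<L}.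
          \<eta> (k,i,l) * (awmse K L \<alpha> H P V b k i l - \<xi> k l))"

end

theory Submission
  imports Defs
begin

text \<open>The Lagrangian depends on a receiver \<open>v = V(k,i,l)\<close> only through the real quadratic
  \<open>\<eta> b (T |v|\<^sup>2 - 2 Re (\<alpha> z v))\<close> with \<open>z = h p\<close>; its conjugate gradient
  \<open>\<eta> b (T v - \<alpha> cnj z)\<close> vanishes at the stated receiver. In the precoder \<open>p\<^sub>k\<close> the conjugate
  gradient of the Lagrangian is \<open>A\<^sub>k p\<^sub>k - c\<^sub>k\<close>, where \<open>A\<^sub>k\<close> is the matrix inverted in the precoder
  formula and \<open>c\<^sub>k\<close> the vector it is applied to. Since \<open>(A\<^sub>k x) \<bullet> x \<ge> \<beta> (x \<bullet> x)\<close>, for \<open>\<beta> > 0\<close>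
  the matrix is invertible and the stated precoder solves \<open>A\<^sub>k p\<^sub>k = c\<^sub>k\<close>; for \<open>\<beta> = 0\<close> all weights
  \<open>\<eta> b |V|\<^sup>2\<close> vanish, so \<open>c\<^sub>k = 0 = p\<^sub>k\<close>. Finally, summing \<open>(A\<^sub>k p\<^sub>k - c\<^sub>k) \<bullet> p\<^sub>k = 0\<close> over \<open>k\<close>
  and using \<open>T |V|\<^sup>2 = \<alpha> Re (V z)\<close> gives \<open>\<beta> \<Sum> |p\<^sub>k|\<^sup>2 = \<Sum> \<eta> b |V|\<^sup>2 = \<beta> E\<^sub>t\<^sub>x\<close>: complementary
  slackness, and feasibility when \<open>\<beta> > 0\<close>.\<close>

lemma inner_vec_complex: "(x::complex^'m) \<bullet> y = Re (\<Sum>m\<in>UNIV. cnj (x $ m) * y $ m)"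
  by (simp add: inner_vec_def inner_complex_def Re_sum)

lemma inner_complex_eq_Re_cnj: "(x::complex) \<bullet> y = Re (cnj x * y)"
  by (simp add: inner_complex_def)

lemma has_conj_gradient_iff_inner:
  "has_conj_gradient f g z \<longleftrightarrow> (f has_derivative (\<lambda>d. 2 * (g \<bullet> d))) (at z)"
  by (simp add: has_conj_gradient_def inner_vec_complex)

lemma has_conj_deriv_iff_inner:
  "has_conj_deriv f g z \<longleftrightarrow> (f has_derivative (\<lambda>d. 2 * (g \<bullet> d))) (at z)"
  by (simp add: has_conj_deriv_def inner_complex_eq_Re_cnj)

lemma has_conj_deriv_quadratic:
  "has_conj_deriv (\<lambda>v. T * (cmod v)^2 - 2 * Re (w * v)) (of_real T * v0 - cnj w) v0"
proof -
  have "((\<lambda>v. T * (cmod v)^2 - 2 * Re (w * v)) has_derivative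
      (\<lambda>d. T * (2 *\<^sub>R (v0 \<bullet> d)) - 2 * Re (w * d))) (at v0)"
    by (intro derivative_eq_intros has_derivative_sqnorm_at) auto
  then show ?thesis
    unfolding has_conj_deriv_iff_inner
    by (rule has_derivative_eq_rhs) (auto simp: inner_complex_def algebra_simps)
qed

lemma vector_scaleR_component_complex: "(r *\<^sub>R (x::complex^'m)) $ i = of_real r * x $ i"
  by (subst vector_scaleR_component) (rule scaleR_conv_of_real)

lemma bounded_linear_rowmul: "bounded_linear (rowmul h)"
proof -
  have "linear (rowmul h)"
    by (rule linearI)
      (simp_all add: rowmul_def sum.distrib distrib_left vector_scaleR_component_complex
        sum_distrib_left mult.left_commute scaleR_sum_right)
  then show ?thesis by (simp add: linear_conv_bounded_linear)
qed

lemma has_derivative_rowmul_sq: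
  "((\<lambda>p. (cmod (rowmul h p))^2) has_derivative (\<lambda>d. 2 * (rowmul h p0 \<bullet> rowmul h d))) (at p0)"
  using has_derivative_compose[OF bounded_linear_imp_has_derivative[OF bounded_linear_rowmul]
      has_derivative_sqnorm_at, where x = p0 and s = UNIV]
  by simp

lemma inner_outerH_mult: "(outerH h *v x) \<bullet> d = rowmul h x \<bullet> rowmul h d"
proof -
  have "(outerH h *v x) $ m = cnj (h $ m) * rowmul h x" for m
    by (simp add: outerH_def matrix_vector_mult_def rowmul_def sum_distrib_left mult.assoc)
  then have "cnj ((outerH h *v x) $ m) * d $ m = cnj (rowmul h x) * (h $ m * d $ m)" for m
    by simp
  then have "(outerH h *v x) \<bullet> d = Re (\<Sum>m\<in>UNIV. cnj (rowmul h x) * (h $ m * d $ m))"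
    by (simp only: inner_vec_complex)
  also have "\<dots> = rowmul h x \<bullet> rowmul h d"
    by (simp only: inner_complex_eq_Re_cnj rowmul_def sum_distrib_left)
  finally show ?thesis .
qed

lemma inner_scaleR_conj_row: "(z *s (\<chi> r. cnj (h $ r))) \<bullet> d = Re (cnj z * rowmul h d)"
  by (simp add: inner_vec_complex rowmul_def sum_distrib_left mult.assoc)

lemma mat_of_real_mult: "mat (complex_of_real r) *v x = r *\<^sub>R x"
proof -
  have "(\<Sum>j\<in>UNIV. (if i = j then complex_of_real r else 0) * x $ j) = complex_of_real r * x $ i" for i
    by (simp add: if_distrib[of "\<lambda>c. c * _"] cong: if_cong)
  then show ?thesis
    unfolding vec_eq_iff vector_scaleR_component_complex by (simp add: mat_def matrix_vector_mult_def)
qed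

lemma cmat_scale_of_real_mult: "cmat_scale (complex_of_real r) M *v x = r *\<^sub>R (M *v x)"
  unfolding vec_eq_iff vector_scaleR_component_complex
  by (simp add: cmat_scale_def matrix_vector_mult_def sum_distrib_left mult.assoc)

lemma matrix_vector_mult_sum_left: "(\<Sum>i\<in>S. M i) *v x = (\<Sum>i\<in>S. M i *v x)"
  by (induct S rule: infinite_finite_induct) (auto simp: matrix_vector_mult_add_rdistrib)

lemma matrix_inv_mult_coercive:
  fixes A :: "complex^'m^'m"
  assumes c: "c > 0" and coercive: "\<And>x. c * (x \<bullet> x) \<le> (A *v x) \<bullet> x"
  shows "A *v (matrix_inv A *v y) = y"
proof -
  have "x = y" if "A *v x = A *v y" for x y
  proof -
    have "c * ((x - y) \<bullet> (x - y)) \<le> 0"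
      using coercive[of "x - y"] that by (simp add: matrix_vector_mult_diff_distrib)
    then show ?thesis
      using c
      by (metis eq_iff_diff_eq_0 inner_eq_zero_iff inner_ge_zero mult_le_0_iff order_antisym not_less)
  qed
  then have "det A \<noteq> 0"
    using det_nz_iff_inj_gen[of "(*v) A"] by (auto intro: injI)
  then have "A ** matrix_inv A = mat 1"
    unfolding invertible_det_nz[symmetric] invertible_def matrix_inv_def by (rule someI_ex[THEN conjunct1])
  then show ?thesis by (simp add: matrix_vector_mul_assoc)
qed

lemma sum_off_diagonal_swap:
  assumes "finite A"
  shows "(\<Sum>k\<in>A. \<Sum>t\<in>A - {k}. f k t) = (\<Sum>t\<in>A. \<Sum>k\<in>A - {t}. f k t)"
proof -
  have "A - {k} = {t \<in> A. k \<noteq> t}" "A - {k} = {t \<in> A. t \<noteq> k}" for k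
    by auto
  then show ?thesis
    using sum.swap_restrict[OF assms assms, of f "\<lambda>k t. k \<noteq> t"] by simp
qed

lemma sum_triangle_delta:
  fixes c :: "'a::comm_monoid_add" and k K l i L :: nat
  assumes "k < K" "l \<le> i" "i < L"
  shows "(\<Sum>k'<K. \<Sum>l'<L. \<Sum>i'\<in>{l'..<L}. if (k',i',l') = (k,i,l) then c else 0) = c"
proof -
  have "(\<Sum>i'\<in>{l'..<L}. if (k',i',l') = (k,i,l) then c else 0) = (if k' = k \<and> l' = l then c else 0)"
    for k' l'
    using assms by (cases "k' = k \<and> l' = l") auto
  moreover have "(\<Sum>l'<L. if k' = k \<and> l' = l then c else 0) = (if k' = k then c else 0)" for k'
    using assms by (cases "k' = k") auto
  ultimately show ?thesis
    using assms by simp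
qed

lemma has_derivative_rowmul_sq_update:
  "((\<lambda>p. (cmod (rowmul h ((P(k0 := p)) t)))^2) has_derivative
     (\<lambda>d. if t = k0 then 2 * (rowmul h (P k0) \<bullet> rowmul h d) else 0)) (at (P k0))"
  by (cases "t = k0") (simp_all add: has_derivative_rowmul_sq)

lemma has_derivative_Re_rowmul_update:
  "((\<lambda>p. Re (c * rowmul h ((P(k0 := p)) t))) has_derivative
     (\<lambda>d. if t = k0 then Re (c * rowmul h d) else 0)) (at (P k0))"
proof (cases "t = k0")
  case True
  have "((\<lambda>p. Re (c * rowmul h p)) has_derivative (\<lambda>d. Re (c * rowmul h d))) (at (P k0))"
    by (intro has_derivative_Re has_derivative_mult_right bounded_linear_imp_has_derivative
        bounded_linear_rowmul)
  then show ?thesis using True by simp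
qed simp

lemma has_derivative_sqnorm_update:
  "((\<lambda>p. (norm ((P(k0 := p)) t))^2) has_derivative
     (\<lambda>d. if t = k0 then 2 * (P k0 \<bullet> d) else 0)) (at (P k0))"
  using has_derivative_sqnorm_at[of "P k0"] by (cases "t = k0") simp_all

locale mse_lagrangian =
  fixes K L :: nat
    and \<alpha> :: "nat \<Rightarrow> nat \<Rightarrow> real"
    and H :: "nat \<Rightarrow> nat \<Rightarrow> complex^'m"
    and Etx :: real
    and xith :: "nat \<Rightarrow> nat \<Rightarrow> real"
    and \<theta> :: "nat \<Rightarrow> real" and \<Gamma> :: "nat \<Rightarrow> nat \<Rightarrow> real"
    and \<eta> :: "nat \<times> nat \<times> nat \<Rightarrow> real" and \<beta> :: real
    and cbar :: real and \<xi> :: "nat \<Rightarrow> nat \<Rightarrow> real"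
    and P :: "nat \<Rightarrow> complex^'m"
    and V :: "nat \<times> nat \<times> nat \<Rightarrow> complex"
    and b :: "nat \<times> nat \<times> nat \<Rightarrow> real"
begin

abbreviation Lag where "Lag \<equiv> lagrangian K L \<alpha> H Etx xith \<theta> \<Gamma> \<eta> \<beta> cbar \<xi>"

definition mse_weight :: "nat \<Rightarrow> nat \<Rightarrow> nat \<Rightarrow> real" where
  "mse_weight t i l = \<eta> (t,i,l) * b (t,i,l) * (cmod (V (t,i,l)))^2"

definition precoder_matrix :: "nat \<Rightarrow> complex^'m^'m" where
  "precoder_matrix k = mat (complex_of_real \<beta>)
     + (\<Sum>l<L. \<Sum>i\<in>{l..<L}. \<Sum>j\<in>{l..<L}.
          cmat_scale (complex_of_real (\<alpha> k j * mse_weight k i l)) (outerH (H k i)))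
     + (\<Sum>t\<in>{..<K} - {k}. \<Sum>l<L. \<Sum>i\<in>{l..<L}.
          cmat_scale (complex_of_real (mse_weight t i l)) (outerH (H t i)))"

definition precoder_vector :: "nat \<Rightarrow> complex^'m" where
  "precoder_vector k = (\<Sum>l<L. \<Sum>i\<in>{l..<L}.
     (complex_of_real (\<eta> (k,i,l) * b (k,i,l) * \<alpha> k l) * cnj (V (k,i,l))) *s (\<chi> r. cnj (H k i $ r)))"

lemma inner_precoder_matrix:
  "(precoder_matrix k *v x) \<bullet> d = \<beta> * (x \<bullet> d)
     + (\<Sum>l<L. \<Sum>i\<in>{l..<L}. \<Sum>j\<in>{l..<L}.
          \<alpha> k j * mse_weight k i l * (rowmul (H k i) x \<bullet> rowmul (H k i) d))
     + (\<Sum>t\<in>{..<K} - {k}. \<Sum>l<L. \<Sum>i\<in>{l..<L}.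
          mse_weight t i l * (rowmul (H t i) x \<bullet> rowmul (H t i) d))"
  unfolding precoder_matrix_def
  by (simp only: matrix_vector_mult_add_rdistrib matrix_vector_mult_sum_left cmat_scale_of_real_mult
      mat_of_real_mult inner_add_left inner_sum_left inner_scaleR_left inner_outerH_mult)

lemma inner_precoder_vector:
  "precoder_vector k \<bullet> d =
     (\<Sum>l<L. \<Sum>i\<in>{l..<L}. \<eta> (k,i,l) * b (k,i,l) * \<alpha> k l * Re (V (k,i,l) * rowmul (H k i) d))"
  unfolding precoder_vector_def by (simp add: inner_sum_left inner_scaleR_conj_row mult.assoc)

lemma has_derivative_Tterm_update:
  assumes "k0 < K"
  shows "((\<lambda>p. Tterm K L \<alpha> H (P(k0 := p)) k i l) has_derivative
     (\<lambda>d. 2 * (if k = k0 then \<alpha> k l + (\<Sum>j\<in>{l<..<L}. \<alpha> k j) else 1)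
        * (rowmul (H k i) (P k0) \<bullet> rowmul (H k i) d))) (at (P k0))"
  unfolding Tterm_def rterm_def
  apply (rule has_derivative_eq_rhs)
   apply (rule has_derivative_mult_right has_derivative_add has_derivative_sum has_derivative_const
      has_derivative_rowmul_sq_update)+
  using assms by (auto simp: sum.delta algebra_simps sum_distrib_left sum_distrib_right)

lemma has_derivative_awmse_update:
  assumes "k0 < K"
  shows "((\<lambda>p. awmse K L \<alpha> H (P(k0 := p)) V b k i l) has_derivative
     (\<lambda>d. 2 * b (k,i,l) * ((cmod (V (k,i,l)))^2 * (if k = k0 then \<alpha> k l + (\<Sum>j\<in>{l<..<L}. \<alpha> k j) else 1)
        * (rowmul (H k i) (P k0) \<bullet> rowmul (H k i) d)
        - (if k = k0 then \<alpha> k l * Re (V (k,i,l) * rowmul (H k i) d) else 0)))) (at (P k0))"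
  unfolding awmse_def mse_def
  apply (rule has_derivative_eq_rhs)
   apply (rule has_derivative_mult_right has_derivative_diff has_derivative_add has_derivative_const
      has_derivative_Tterm_update[OF assms] has_derivative_Re_rowmul_update)+
  by (auto simp: algebra_simps)

text \<open>The right-hand side is the derivative of the Lagrangian in \<open>p\<^sub>k\<^sub>0\<close> along \<open>d\<close>, term by term as
  given by \<open>has_derivative_awmse_update\<close>.\<close>

lemma inner_precoder_residual:
  assumes "k0 < K"
  shows "2 * ((precoder_matrix k0 *v x - precoder_vector k0) \<bullet> d) =
    2 * \<beta> * (x \<bullet> d) + (\<Sum>k<K. \<Sum>l<L. \<Sum>i\<in>{l..<L}. \<eta> (k,i,l) *
      (2 * b (k,i,l) * ((cmod (V (k,i,l)))^2 * (if k = k0 then \<alpha> k l + (\<Sum>j\<in>{l<..<L}. \<alpha> k j) else 1)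
        * (rowmul (H k i) x \<bullet> rowmul (H k i) d)
        - (if k = k0 then \<alpha> k l * Re (V (k,i,l) * rowmul (H k i) d) else 0))))"
    (is "_ = _ + (\<Sum>k<K. ?cluster k)")
proof -
  define g where "g t i = rowmul (H t i) x \<bullet> rowmul (H t i) d" for t i
  define own where "own = (\<Sum>l<L. \<Sum>i\<in>{l..<L}. \<Sum>j\<in>{l..<L}. \<alpha> k0 j * mse_weight k0 i l * g k0 i)"
  define cross where "cross t = (\<Sum>l<L. \<Sum>i\<in>{l..<L}. mse_weight t i l * g t i)" for t
  define signal where "signal = (\<Sum>l<L. \<Sum>i\<in>{l..<L}.
    \<eta> (k0,i,l) * b (k0,i,l) * \<alpha> k0 l * Re (V (k0,i,l) * rowmul (H k0 i) d))"
  have own_cluster: "?cluster k0 = 2 * own - 2 * signal"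
  proof -
    have "?cluster k0 = (\<Sum>l<L. \<Sum>i\<in>{l..<L}.
        2 * (\<Sum>j\<in>{l..<L}. \<alpha> k0 j * mse_weight k0 i l * g k0 i)
        - 2 * (\<eta> (k0,i,l) * b (k0,i,l) * \<alpha> k0 l * Re (V (k0,i,l) * rowmul (H k0 i) d)))"
      by (intro sum.cong refl)
        (simp add: sum.atLeast_Suc_lessThan atLeastSucLessThan_greaterThanLessThan g_def mse_weight_def
          sum_distrib_left sum_distrib_right algebra_simps)
    then show ?thesis
      unfolding own_def signal_def by (simp add: sum_subtractf sum_distrib_left)
  qed
  have cross_cluster: "?cluster k = 2 * cross k" if "k \<in> {..<K} - {k0}" for k
    using that unfolding cross_def g_def mse_weight_def
    by (simp add: sum_distrib_left algebra_simps)
  have "(\<Sum>k<K. ?cluster k) = ?cluster k0 + (\<Sum>k\<in>{..<K} - {k0}. ?cluster k)"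
    using assms by (intro sum.remove) auto
  also have "\<dots> = 2 * own - 2 * signal + (\<Sum>t\<in>{..<K} - {k0}. 2 * cross t)"
    unfolding own_cluster
    by (rule arg_cong[where f = "\<lambda>s. _ + s"], rule sum.cong[OF refl], rule cross_cluster)
  finally have "(\<Sum>k<K. ?cluster k) = 2 * own - 2 * signal + 2 * (\<Sum>t\<in>{..<K} - {k0}. cross t)"
    by (simp only: sum_distrib_left)
  moreover have "(precoder_matrix k0 *v x - precoder_vector k0) \<bullet> d
      = \<beta> * (x \<bullet> d) + own + (\<Sum>t\<in>{..<K} - {k0}. cross t) - signal"
    unfolding inner_diff_left inner_precoder_matrix inner_precoder_vector own_def cross_def signal_def g_def ..
  ultimately show ?thesis by simp
qed

lemma lagrangian_conj_gradient_precoder: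
  assumes "k0 < K"
  shows "has_conj_gradient (\<lambda>p. Lag (P(k0 := p)) V b)
    (precoder_matrix k0 *v P k0 - precoder_vector k0) (P k0)"
  unfolding has_conj_gradient_iff_inner lagrangian_def inner_precoder_residual[OF assms]
  apply (rule has_derivative_eq_rhs)
   apply (rule has_derivative_awmse_update[OF assms] has_derivative_mult_right has_derivative_diff
      has_derivative_add has_derivative_sum has_derivative_const has_derivative_sqnorm_update)+
  using assms by (simp add: sum.delta algebra_simps)

lemma lagrangian_conj_deriv_receiver:
  assumes "k < K" "l \<le> i" "i < L"
  shows "has_conj_deriv (\<lambda>v. Lag P (V((k,i,l) := v)) b)
    (of_real (\<eta> (k,i,l) * b (k,i,l)) * (of_real (Tterm K L \<alpha> H P k i l) * V (k,i,l)
       - of_real (\<alpha> k l) * cnj (rowmul (H k i) (P k)))) (V (k,i,l))"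
proof -
  define T where "T = Tterm K L \<alpha> H P k i l"
  define w where "w = of_real (\<alpha> k l) * rowmul (H k i) (P k)"
  define g where "g = of_real T * V (k,i,l) - cnj w"
  have own: "((\<lambda>v. awmse K L \<alpha> H P (V((k,i,l) := v)) b k i l) has_derivative
      (\<lambda>d. b (k,i,l) * (2 * (g \<bullet> d)))) (at (V (k,i,l)))"
  proof -
    have "awmse K L \<alpha> H P (V((k,i,l) := v)) b k i l = b (k,i,l) * (T * (cmod v)^2 - 2 * Re (w * v))
        + (b (k,i,l) * \<alpha> k l - ln (\<alpha> k l * b (k,i,l)))" for v
      unfolding awmse_def mse_def T_def w_def by (simp add: algebra_simps)
    moreover have "((\<lambda>v. T * (cmod v)^2 - 2 * Re (w * v)) has_derivative (\<lambda>d. 2 * (g \<bullet> d)))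
        (at (V (k,i,l)))"
      using has_conj_deriv_quadratic unfolding has_conj_deriv_iff_inner g_def .
    ultimately show ?thesis
      by (simp add: has_derivative_add_const has_derivative_mult_right)
  qed
  have term_deriv:
    "((\<lambda>v. \<eta> (k',i',l') * (awmse K L \<alpha> H P (V((k,i,l) := v)) b k' i' l' - \<xi> k' l')) has_derivative
      (\<lambda>d. if (k',i',l') = (k,i,l) then \<eta> (k,i,l) * (b (k,i,l) * (2 * (g \<bullet> d))) else 0))
      (at (V (k,i,l)))" for k' i' l'
  proof (cases "(k',i',l') = (k,i,l)")
    case True
    have "((\<lambda>v. \<eta> (k,i,l) * (awmse K L \<alpha> H P (V((k,i,l) := v)) b k i l - \<xi> k l)) has_derivative
        (\<lambda>d. \<eta> (k,i,l) * (b (k,i,l) * (2 * (g \<bullet> d)) - 0))) (at (V (k,i,l)))"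
      by (intro has_derivative_mult_right has_derivative_diff own has_derivative_const)
    then show ?thesis using True by simp
  next
    case False
    then have "(V((k,i,l) := v)) (k',i',l') = V (k',i',l')" for v
      by (rule fun_upd_other)
    then have "awmse K L \<alpha> H P (V((k,i,l) := v)) b k' i' l' = awmse K L \<alpha> H P V b k' i' l'" for v
      by (simp only: awmse_def mse_def)
    then show ?thesis using False by (simp del: prod.inject)
  qed
  have "((\<lambda>v. Lag P (V((k,i,l) := v)) b) has_derivative
      (\<lambda>d. \<eta> (k,i,l) * (b (k,i,l) * (2 * (g \<bullet> d))))) (at (V (k,i,l)))"
    unfolding lagrangian_def
    apply (rule has_derivative_eq_rhs)
     apply (rule term_deriv has_derivative_add has_derivative_diff has_derivative_sum has_derivative_const)+
    using assms by (simp add: sum_triangle_delta del: prod.inject)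
  then show ?thesis
    unfolding has_conj_deriv_iff_inner g_def T_def w_def
    by (simp add: inner_complex_eq_Re_cnj algebra_simps)
qed

lemma sum_inner_precoder_matrix:
  "(\<Sum>k<K. (precoder_matrix k *v P k) \<bullet> P k) = \<beta> * (\<Sum>k<K. (norm (P k))^2)
     + (\<Sum>k<K. \<Sum>l<L. \<Sum>i\<in>{l..<L}. mse_weight k i l * (Tterm K L \<alpha> H P k i l - 1))"
proof -
  define q where "q t i s = (cmod (rowmul (H t i) (P s)))^2" for t i s
  define own where "own k l i = (\<Sum>j\<in>{l..<L}. \<alpha> k j * mse_weight k i l * q k i k)" for k l i
  have "(\<Sum>k<K. \<Sum>t\<in>{..<K} - {k}. \<Sum>l<L. \<Sum>i\<in>{l..<L}. mse_weight t i l * q t i k)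
      = (\<Sum>t<K. \<Sum>k\<in>{..<K} - {t}. \<Sum>l<L. \<Sum>i\<in>{l..<L}. mse_weight t i l * q t i k)"
    by (rule sum_off_diagonal_swap) simp
  also have "\<dots> = (\<Sum>t<K. \<Sum>l<L. \<Sum>i\<in>{l..<L}. mse_weight t i l * (\<Sum>s\<in>{..<K} - {t}. q t i s))"
    unfolding sum_distrib_left
    by (rule sum.cong[OF refl], subst sum.swap, rule sum.cong[OF refl], rule sum.swap)
  finally have cross: "(\<Sum>k<K. \<Sum>t\<in>{..<K} - {k}. \<Sum>l<L. \<Sum>i\<in>{l..<L}. mse_weight t i l * q t i k)
      = (\<Sum>t<K. \<Sum>l<L. \<Sum>i\<in>{l..<L}. mse_weight t i l * (\<Sum>s\<in>{..<K} - {t}. q t i s))" .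
  have per_user: "own k l i + mse_weight k i l * (\<Sum>s\<in>{..<K} - {k}. q k i s)
      = mse_weight k i l * (Tterm K L \<alpha> H P k i l - 1)" if "l < L" for k i l
  proof -
    have "own k l i = mse_weight k i l * (\<Sum>j\<in>{l..<L}. \<alpha> k j * q k i k)"
      unfolding own_def sum_distrib_left by (simp only: mult_ac)
    moreover have "Tterm K L \<alpha> H P k i l - 1
        = (\<Sum>j\<in>{l..<L}. \<alpha> k j * q k i k) + (\<Sum>s\<in>{..<K} - {k}. q k i s)"
      using that unfolding Tterm_def rterm_def q_def
      by (simp add: sum.atLeast_Suc_lessThan atLeastSucLessThan_greaterThanLessThan)
    ultimately show ?thesis by (simp add: distrib_left)
  qed
  have "(\<Sum>k<K. (precoder_matrix k *v P k) \<bullet> P k) = \<beta> * (\<Sum>k<K. (norm (P k))^2)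
      + (\<Sum>k<K. \<Sum>l<L. \<Sum>i\<in>{l..<L}. own k l i)
      + (\<Sum>k<K. \<Sum>t\<in>{..<K} - {k}. \<Sum>l<L. \<Sum>i\<in>{l..<L}. mse_weight t i l * q t i k)"
    unfolding inner_precoder_matrix own_def q_def
    by (simp only: dot_square_norm sum.distrib sum_distrib_left)
  also have "\<dots> = \<beta> * (\<Sum>k<K. (norm (P k))^2)
      + (\<Sum>k<K. \<Sum>l<L. \<Sum>i\<in>{l..<L}. own k l i + mse_weight k i l * (\<Sum>s\<in>{..<K} - {k}. q k i s))"
    unfolding cross by (simp only: sum.distrib add.assoc)
  also have "\<dots> = \<beta> * (\<Sum>k<K. (norm (P k))^2)
      + (\<Sum>k<K. \<Sum>l<L. \<Sum>i\<in>{l..<L}. mse_weight k i l * (Tterm K L \<alpha> H P k i l - 1))"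
    using per_user by (intro arg_cong[where f = "\<lambda>s. _ + s"] sum.cong refl) auto
  finally show ?thesis .
qed

end

locale mse_closed_form = mse_lagrangian +
  assumes alpha_pos: "\<And>k l. k < K \<Longrightarrow> l < L \<Longrightarrow> \<alpha> k l > 0"
    and Etx_pos: "Etx > 0"
    and b_pos: "\<And>k i l. k < K \<Longrightarrow> l \<le> i \<Longrightarrow> i < L \<Longrightarrow> b (k,i,l) > 0"
    and eta_nonneg: "\<And>k i l. k < K \<Longrightarrow> l \<le> i \<Longrightarrow> i < L \<Longrightarrow> \<eta> (k,i,l) \<ge> 0"
    and V_def: "\<And>k i l. k < K \<Longrightarrow> l \<le> i \<Longrightarrow> i < L \<Longrightarrow>
        V (k,i,l) = complex_of_real (\<alpha> k l) * cnj (rowmul (H k i) (P k))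
                    / complex_of_real (Tterm K L \<alpha> H P k i l)"
    and beta_def: "\<beta> = (1 / Etx) *
        (\<Sum>k<K. \<Sum>l<L. \<Sum>i\<in>{l..<L}. \<eta> (k,i,l) * b (k,i,l) * (cmod (V (k,i,l)))^2)"
    and P_def: "\<And>k. k < K \<Longrightarrow>
        P k = matrix_inv
          (mat (complex_of_real \<beta>)
           + (\<Sum>l<L. \<Sum>i\<in>{l..<L}. \<Sum>j\<in>{l..<L}.
                cmat_scale (complex_of_real (\<alpha> k j * \<eta> (k,i,l) * b (k,i,l) * (cmod (V (k,i,l)))^2))
                (outerH (H k i)))
           + (\<Sum>t\<in>{..<K} - {k}. \<Sum>l<L. \<Sum>i\<in>{l..<L}.
                cmat_scale (complex_of_real (\<eta> (t,i,l) * b (t,i,l) * (cmod (V (t,i,l)))^2))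
                (outerH (H t i))))
        *v (\<Sum>l<L. \<Sum>i\<in>{l..<L}.
              (complex_of_real (\<eta> (k,i,l) * b (k,i,l) * \<alpha> k l) * cnj (V (k,i,l)))
              *s (\<chi> r. cnj (H k i $ r)))"
begin

lemma Tterm_ge_one:
  assumes "k < K" "l \<le> i" "i < L"
  shows "1 \<le> Tterm K L \<alpha> H P k i l"
proof -
  have "0 \<le> (\<Sum>j\<in>{l<..<L}. \<alpha> k j * (cmod (rowmul (H k i) (P k)))^2)"
    using assms alpha_pos by (intro sum_nonneg) (simp add: less_imp_le)
  moreover have "0 \<le> (\<Sum>t\<in>{..<K} - {k}. (cmod (rowmul (H k i) (P t)))^2)"
    by (intro sum_nonneg) simp
  moreover have "0 \<le> \<alpha> k l * (cmod (rowmul (H k i) (P k)))^2"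
    using assms alpha_pos[of k l] by simp
  ultimately show ?thesis
    unfolding Tterm_def rterm_def by linarith
qed

lemma Tterm_mult_receiver:
  assumes "k < K" "l \<le> i" "i < L"
  shows "of_real (Tterm K L \<alpha> H P k i l) * V (k,i,l)
    = of_real (\<alpha> k l) * cnj (rowmul (H k i) (P k))"
  using V_def[OF assms] Tterm_ge_one[OF assms] by simp

lemma mse_weight_mult_Tterm:
  assumes "k < K" "l \<le> i" "i < L"
  shows "mse_weight k i l * Tterm K L \<alpha> H P k i l
    = \<eta> (k,i,l) * b (k,i,l) * \<alpha> k l * Re (V (k,i,l) * rowmul (H k i) (P k))"
proof -
  have "(cmod (V (k,i,l)))^2 * Tterm K L \<alpha> H P k i l
      = Re (cnj (V (k,i,l)) * (of_real (Tterm K L \<alpha> H P k i l) * V (k,i,l)))"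
    unfolding cmod_power2 by (simp add: power2_eq_square algebra_simps)
  also have "\<dots> = \<alpha> k l * Re (V (k,i,l) * rowmul (H k i) (P k))"
    unfolding Tterm_mult_receiver[OF assms] by (simp add: algebra_simps)
  finally show ?thesis
    unfolding mse_weight_def by (simp add: mult.assoc)
qed

lemma lagrangian_stationary_receiver:
  assumes "k < K" "l \<le> i" "i < L"
  shows "has_conj_deriv (\<lambda>v. Lag P (V((k,i,l) := v)) b) 0 (V (k,i,l))"
  using lagrangian_conj_deriv_receiver[OF assms] by (simp add: Tterm_mult_receiver[OF assms])

lemma mse_weight_nonneg: "t < K \<Longrightarrow> l \<le> i \<Longrightarrow> i < L \<Longrightarrow> 0 \<le> mse_weight t i l"
  unfolding mse_weight_def using eta_nonneg b_pos by (simp add: less_imp_le)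

lemma sum_mse_weight: "(\<Sum>k<K. \<Sum>l<L. \<Sum>i\<in>{l..<L}. mse_weight k i l) = \<beta> * Etx"
  using beta_def Etx_pos unfolding mse_weight_def by simp

lemma beta_nonneg: "0 \<le> \<beta>"
  using sum_mse_weight Etx_pos mse_weight_nonneg
  by (metis (no_types, lifting) atLeastLessThan_iff lessThan_iff sum_nonneg zero_le_mult_iff not_less)

lemma precoder_matrix_coercive:
  assumes "k < K"
  shows "\<beta> * (x \<bullet> x) \<le> (precoder_matrix k *v x) \<bullet> x"
  unfolding inner_precoder_matrix using assms alpha_pos mse_weight_nonneg
  by (intro add_increasing2 sum_nonneg mult_nonneg_nonneg) (auto simp: less_imp_le)

lemma precoder_eq_matrix_inv: "k < K \<Longrightarrow> P k = matrix_inv (precoder_matrix k) *v precoder_vector k"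
  using P_def unfolding precoder_matrix_def precoder_vector_def mse_weight_def by (simp add: mult.assoc)

lemma precoder_vector_eq_zero:
  assumes "\<beta> = 0" "k < K"
  shows "precoder_vector k = 0"
proof -
  have user_sum_nonneg: "0 \<le> (\<Sum>i\<in>{l..<L}. mse_weight t i l)" if "t < K" for t l
    using that mse_weight_nonneg by (intro sum_nonneg) auto
  have "(\<Sum>k<K. \<Sum>l<L. \<Sum>i\<in>{l..<L}. mse_weight k i l) = 0"
    using sum_mse_weight assms(1) by simp
  then have "(\<Sum>l<L. \<Sum>i\<in>{l..<L}. mse_weight k i l) = 0"
    using assms(2) user_sum_nonneg mse_weight_nonneg
    by (subst (asm) sum_nonneg_eq_0_iff) (auto intro!: sum_nonneg)
  then have "(\<Sum>i\<in>{l..<L}. mse_weight k i l) = 0" if "l < L" for l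
    using that assms user_sum_nonneg by (subst (asm) sum_nonneg_eq_0_iff) auto
  then have weight_zero: "mse_weight k i l = 0" if "l \<le> i" "i < L" for i l
    using that assms mse_weight_nonneg by (subst (asm) sum_nonneg_eq_0_iff) auto
  have "\<eta> (k,i,l) = 0 \<or> V (k,i,l) = 0" if "l \<le> i" "i < L" for i l
    using weight_zero[OF that] b_pos[OF assms(2) that] unfolding mse_weight_def by auto
  then show ?thesis
    unfolding precoder_vector_def by (intro sum.neutral ballI) auto
qed

lemma precoder_matrix_mult_precoder:
  assumes "k < K"
  shows "precoder_matrix k *v P k = precoder_vector k"
proof (cases "\<beta> = 0")
  case True
  then show ?thesis
    using precoder_eq_matrix_inv[OF assms] precoder_vector_eq_zero[OF True assms] by simp
next
  case False
  then have "\<beta> > 0" using beta_nonneg by simp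
  then show ?thesis
    using precoder_eq_matrix_inv[OF assms] matrix_inv_mult_coercive precoder_matrix_coercive[OF assms] by metis
qed

lemma lagrangian_stationary_precoder:
  "k < K \<Longrightarrow> has_conj_gradient (\<lambda>p. Lag (P(k := p)) V b) 0 (P k)"
  using lagrangian_conj_gradient_precoder precoder_matrix_mult_precoder by fastforce

lemma complementary_slackness: "\<beta> * ((\<Sum>k<K. (norm (P k))^2) - Etx) = 0"
proof -
  have "(\<Sum>k<K. (precoder_matrix k *v P k) \<bullet> P k) = (\<Sum>k<K. precoder_vector k \<bullet> P k)"
    by (simp add: precoder_matrix_mult_precoder)
  also have "\<dots> = (\<Sum>k<K. \<Sum>l<L. \<Sum>i\<in>{l..<L}. mse_weight k i l * Tterm K L \<alpha> H P k i l)"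
    unfolding inner_precoder_vector by (intro sum.cong refl) (simp add: mse_weight_mult_Tterm)
  finally have "\<beta> * (\<Sum>k<K. (norm (P k))^2) = (\<Sum>k<K. \<Sum>l<L. \<Sum>i\<in>{l..<L}. mse_weight k i l)"
    unfolding sum_inner_precoder_matrix by (simp add: right_diff_distrib sum_subtractf)
  then show ?thesis
    unfolding sum_mse_weight by (simp add: right_diff_distrib)
qed

lemma precoder_power_le_Etx: "(\<Sum>k<K. (norm (P k))^2) \<le> Etx"
proof (cases "\<beta> = 0")
  case True
  then have "P k = 0" if "k < K" for k
    using precoder_eq_matrix_inv[OF that] precoder_vector_eq_zero[OF True that] by simp
  then show ?thesis using Etx_pos by simp
next
  case False
  then show ?thesis using complementary_slackness by simp
qed

end

theorem theorem1:
  fixes K L :: nat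
    and \<alpha> :: "nat \<Rightarrow> nat \<Rightarrow> real"
    and H :: "nat \<Rightarrow> nat \<Rightarrow> complex^'m"
    and Etx :: real
    and xith :: "nat \<Rightarrow> nat \<Rightarrow> real"
    and \<theta> :: "nat \<Rightarrow> real" and \<Gamma> :: "nat \<Rightarrow> nat \<Rightarrow> real"
    and \<eta> :: "nat \<times> nat \<times> nat \<Rightarrow> real" and \<beta> :: real
    and cbar :: real and \<xi> :: "nat \<Rightarrow> nat \<Rightarrow> real"
    and P :: "nat \<Rightarrow> complex^'m"
    and V :: "nat \<times> nat \<times> nat \<Rightarrow> complex"
    and b :: "nat \<times> nat \<times> nat \<Rightarrow> real"
  assumes alpha_pos: "\<And>k l. k < K \<Longrightarrow> l < L \<Longrightarrow> \<alpha> k l > 0"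
    and alpha_sum: "\<And>k. k < K \<Longrightarrow> (\<Sum>l<L. \<alpha> k l) = 1"
    and Etx_pos: "Etx > 0"
    and b_pos: "\<And>k i l. k < K \<Longrightarrow> l \<le> i \<Longrightarrow> i < L \<Longrightarrow> b (k,i,l) > 0"
    and theta_nonneg: "\<And>k. k < K \<Longrightarrow> \<theta> k \<ge> 0"
    and Gamma_nonneg: "\<And>k l. k < K \<Longrightarrow> l < L \<Longrightarrow> \<Gamma> k l \<ge> 0"
    and eta_nonneg: "\<And>k i l. k < K \<Longrightarrow> l \<le> i \<Longrightarrow> i < L \<Longrightarrow> \<eta> (k,i,l) \<ge> 0"
    and V_def: "\<And>k i l. k < K \<Longrightarrow> l \<le> i \<Longrightarrow> i < L \<Longrightarrow>
        V (k,i,l) = complex_of_real (\<alpha> k l) * cnj (rowmul (H k i) (P k))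
                    / complex_of_real (Tterm K L \<alpha> H P k i l)"
    and beta_def: "\<beta> = (1 / Etx) *
        (\<Sum>k<K. \<Sum>l<L. \<Sum>i\<in>{l..<L}. \<eta> (k,i,l) * b (k,i,l) * (cmod (V (k,i,l)))^2)"
    and P_def: "\<And>k. k < K \<Longrightarrow>
        P k = matrix_inv
          (mat (complex_of_real \<beta>)
           + (\<Sum>l<L. \<Sum>i\<in>{l..<L}. \<Sum>j\<in>{l..<L}.
                cmat_scale (complex_of_real (\<alpha> k j * \<eta> (k,i,l) * b (k,i,l) * (cmod (V (k,i,l)))^2))
                (outerH (H k i)))
           + (\<Sum>t\<in>{..<K} - {k}. \<Sum>l<L. \<Sum>i\<in>{l..<L}.
                cmat_scale (complex_of_real (\<eta> (t,i,l) * b (t,i,l) * (cmod (V (t,i,l)))^2))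
                (outerH (H t i))))
        *v (\<Sum>l<L. \<Sum>i\<in>{l..<L}.
              (complex_of_real (\<eta> (k,i,l) * b (k,i,l) * \<alpha> k l) * cnj (V (k,i,l)))
              *s (\<chi> r. cnj (H k i $ r)))"
  shows "\<beta> \<ge> 0
    \<and> (\<Sum>k<K. (norm (P k))^2) \<le> Etx
    \<and> \<beta> * ((\<Sum>k<K. (norm (P k))^2) - Etx) = 0
    \<and> (\<forall>k i l. k < K \<and> l \<le> i \<and> i < L \<longrightarrow>
          has_conj_deriv
            (\<lambda>v. lagrangian K L \<alpha> H Etx xith \<theta> \<Gamma> \<eta> \<beta> cbar \<xi> P (V((k,i,l) := v)) b)
            0 (V (k,i,l)))
    \<and> (\<forall>k. k < K \<longrightarrow>
          has_conj_gradient
            (\<lambda>p. lagrangian K L \<alpha> H Etx xith \<theta> \<Gamma> \<eta> \<beta> cbar \<xi> (P(k := p)) V b)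
            0 (P k))"
proof -
  interpret mse_closed_form K L \<alpha> H Etx xith \<theta> \<Gamma> \<eta> \<beta> cbar \<xi> P V b
    by unfold_locales (fact alpha_pos Etx_pos b_pos eta_nonneg V_def beta_def P_def)+
  show ?thesis
    using beta_nonneg precoder_power_le_Etx complementary_slackness
      lagrangian_stationary_receiver lagrangian_stationary_precoder by blast
qed

end
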